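(* Let $Q$ be an $n$-dimensional manifold, $k\ge 1$, and let $L:\mathbb{R}^k\times T^1_kQ\to\mathbb{R}$ be a smooth Lagrangian, written in local coordinates as $L(x^\mu,q^i,q^i_\mu)$. Let $\widetilde L:\mathbb{R}^k\times T^1_kTQ\to\mathbb{R}$ be the prolonged Lagrangian, given in the induced coordinates $(x^\mu,q^i,v^i,q^i_\mu,v^i_\mu)$ by $$\widetilde{L}(x^{\mu},q^i,v^{i},q^i_{\mu},v^{i}_{\mu})=\frac{\partial L}{\partial q^{i}}(x^{\mu},q^i,q^i_{\mu})\,v^{i}+\frac{\partial L}{\partial q^i_{\mu}}(x^{\mu},q^i,q^i_{\mu})\,v^i_{\mu}$$ (summation over repeated indices). Then: (1) For a map $\psi:U\subset\mathbb{R}^k\to TQ$, $\psi(\mathbf{x})=(q^i(\mathbf{x}),v^i(\mathbf{x}))$, with $q^i_\mu=\partial q^i/\partial x^\mu$ and $v^i_\mu=\partial v^i/\partial x^\mu$ evaluated along $\psi$, the Euler–Lagrange field equations of $\widetilde L$, $$\sum_\mu\frac{d}{dx^{\mu}}\Big(\frac{\partial \widetilde L}{\partial q^i_{\mu}}\Big)-\frac{\partial \widetilde L}{\partial q^i}=0,\qquad \sum_\mu\frac{d}{dx^{\mu}}\Big(\frac{\partial \widetilde L}{\partial v^i_{\mu}}\Big)-\frac{\partial \widetilde L}{\partial v^i}=0,\qquad 1\le i\le n,$$ are equivalent to the system $$\sum_\mu\frac{d}{dx^{\mu}}\Big[\frac{\partial^2 L}{\partial q^j\partial q^i_{\mu}}v^j+\frac{\partial^2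 L}{\partial q^j_{\gamma}\partial q^i_{\mu}}v^j_{\gamma}\Big]-\frac{\partial^2 L}{\partial q^i\partial q^j}v^j-\frac{\partial^2 L}{\partial q^i\partial q^j_{\gamma}}v^j_{\gamma}=0,\qquad \sum_\mu\frac{d}{dx^{\mu}}\Big(\frac{\partial L}{\partial q^i_{\mu}}\Big)-\frac{\partial L}{\partial q^i}=0,$$ i.e. the Jacobi field equations for $L$ together with the Euler–Lagrange field equations for $L$. (2) If $L$ is regular, then $\widetilde L$ is regular.
   Context: $T^1_kQ=TQ\oplus\cdots\oplus TQ$ ($k$ copies) is the bundle of $k^1$-velocities of $Q$, with local coordinates $(q^i,q^i_\mu)$, $1\le i\le n$, $1\le\mu\le k$, where $q^i_\mu$ are the components of the $\mu$-th tangent vector; $\mathbb{R}^k$ has coordinates $\mathbf{x}=(x^1,\dots,x^k)$. Similarly $T^1_kTQ$ is the bundle of $k^1$-velocities of the manifold $TQ$, with induced coordinates $(q^i,v^i,q^i_\mu,v^i_\mu)$ where $(q^i,v^i)$ are coordinates on $TQ$. The operator $\frac{d}{dx^\mu}$ denotes the total derivative along the field. A Lagrangian $L$ on $\mathbb{R}^k\times T^1_kQ$ is called regular if the matrix $\big(\frac{\partial^2 L}{\partial q^i_\mu\partial q^j_\nu}\big)$ (rows indexed by $(i,\mu)$, columns by $(j,\nu)$) is nonsingular at every point; regularity of $\widetilde L$ means nonsingularity of its Hessian with respect to all the velocity variables $(q^i_\mu,v^i_\mu)$. *)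

theory Defs
  imports "HOL-Analysis.Analysis"
begin

definition pd :: "('a::real_normed_vector \<Rightarrow> 'b::real_normed_vector) \<Rightarrow> 'a \<Rightarrow> 'a \<Rightarrow> 'b" where
  "pd f w z = vector_derivative (\<lambda>t::real. f (z + t *\<^sub>R w)) (at 0)"

fun iter_pd :: "'a::real_normed_vector list \<Rightarrow> ('a \<Rightarrow> 'b::real_normed_vector) \<Rightarrow> 'a \<Rightarrow> 'b" where
  "iter_pd [] f = f"
| "iter_pd (w # ws) f = pd (iter_pd ws f) w"

definition smooth_on :: "'a::real_normed_vector set \<Rightarrow> ('a \<Rightarrow> 'b::real_normed_vector) \<Rightarrow> bool" where
  "smooth_on U f \<longleftrightarrow> (\<forall>ws. \<forall>z\<in>U. iter_pd ws f differentiable (at z))"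

(* Coordinates on R^k x T^1_k Q: (x, q, Q) with Q $ i $ mu = q^i_mu *)
type_synonym ('n,'k) jet = "(real^'k) \<times> (real^'n) \<times> (real^'k^'n)"
(* Coordinates on R^k x T^1_k TQ: (x, (q,v), (Q,V)) *)
type_synonym ('n,'k) jetT = "(real^'k) \<times> ((real^'n) \<times> (real^'n)) \<times> ((real^'k^'n) \<times> (real^'k^'n))"

definition e_q :: "'n::finite \<Rightarrow> ('n,'k::finite) jet" where
  "e_q i = (0, axis i 1, 0)"
definition e_qd :: "'n::finite \<Rightarrow> 'k::finite \<Rightarrow> ('n,'k) jet" where
  "e_qd i mu = (0, 0, axis i (axis mu 1))"

definition eT_q :: "'n::finite \<Rightarrow> ('n,'k::finite) jetT" where
  "eT_q i = (0, (axis i 1, 0), (0, 0))"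
definition eT_v :: "'n::finite \<Rightarrow> ('n,'k::finite) jetT" where
  "eT_v i = (0, (0, axis i 1), (0, 0))"
definition eT_qd :: "'n::finite \<Rightarrow> 'k::finite \<Rightarrow> ('n,'k) jetT" where
  "eT_qd i mu = (0, (0, 0), (axis i (axis mu 1), 0))"
definition eT_vd :: "'n::finite \<Rightarrow> 'k::finite \<Rightarrow> ('n,'k) jetT" where
  "eT_vd i mu = (0, (0, 0), (0, axis i (axis mu 1)))"

definition Ltilde :: "(('n::finite,'k::finite) jet \<Rightarrow> real) \<Rightarrow> ('n,'k) jetT \<Rightarrow> real" where
  "Ltilde L = (\<lambda>(x, (q, v), (Q, V)).
     (\<Sum>i\<in>UNIV. pd L (e_q i) (x, q, Q) * v $ i)
   + (\<Sum>i\<in>UNIV. \<Sum>mu\<in>UNIV. pd L (e_qd i mu) (x, q, Q) * V $ i $ mu))"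

definition dx :: "'k::finite \<Rightarrow> (real^'k \<Rightarrow> 'b::real_normed_vector) \<Rightarrow> real^'k \<Rightarrow> 'b" where
  "dx mu g = pd g (axis mu 1)"

definition jac :: "(real^'k::finite \<Rightarrow> real^'n::finite) \<Rightarrow> real^'k \<Rightarrow> real^'k^'n" where
  "jac phi x = (\<chi> i. \<chi> mu. dx mu (\<lambda>y. phi y $ i) x)"

definition prolong :: "(real^'k::finite \<Rightarrow> real^'n::finite) \<Rightarrow> real^'k \<Rightarrow> ('n,'k) jet" where
  "prolong phi x = (x, phi x, jac phi x)"

definition prolongT :: "(real^'k::finite \<Rightarrow> (real^'n::finite) \<times> (real^'n)) \<Rightarrow> real^'k \<Rightarrow> ('n,'k) jetT" where
  "prolongT psi x = (x, (fst (psi x), snd (psi x)),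
                     (jac (\<lambda>y. fst (psi y)) x, jac (\<lambda>y. snd (psi y)) x))"

definition regular :: "(('n::finite,'k::finite) jet \<Rightarrow> real) \<Rightarrow> bool" where
  "regular L \<longleftrightarrow> (\<forall>z. det (\<chi> (a::'n\<times>'k) (b::'n\<times>'k).
        pd (pd L (e_qd (fst b) (snd b))) (e_qd (fst a) (snd a)) z) \<noteq> 0)"

definition velT :: "('n::finite \<times> 'k::finite) + ('n \<times> 'k) \<Rightarrow> ('n,'k) jetT" where
  "velT a = (case a of Inl (i, mu) \<Rightarrow> eT_qd i mu | Inr (i, mu) \<Rightarrow> eT_vd i mu)"

definition regularT :: "(('n::finite,'k::finite) jetT \<Rightarrow> real) \<Rightarrow> bool" where
  "regularT L \<longleftrightarrow> (\<forall>z. det (\<chi> (a::('n\<times>'k)+('n\<times>'k)) (b::('n\<times>'k)+('n\<times>'k)).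
        pd (pd L (velT b)) (velT a) z) \<noteq> 0)"

end

theory Submission
  imports Defs
begin

text \<open>
  The prolonged Lagrangian is linear in the fibre variables \<open>(v, V)\<close>, with the first partial
  derivatives of \<open>L\<close> as coefficients. Hence its partial derivatives in the \<open>v\<close>-directions are the
  first partials of \<open>L\<close>, and those in the \<open>q\<close>-directions are second partials of \<open>L\<close> contracted
  with \<open>(v, V)\<close>. Once the second partials of \<open>L\<close> are known to be symmetric (Schwarz), the
  Euler--Lagrange equations of \<open>Ltilde L\<close> become, term by term, the Jacobi equations and the
  Euler--Lagrange equations of \<open>L\<close>. The velocity Hessian of \<open>Ltilde L\<close> has the block form
  \<open>[[C, M], [M, 0]]\<close> with \<open>M\<close> the velocity Hessian of \<open>L\<close>, so it is nonsingular whenever \<open>M\<close> is.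
\<close>

lemma has_vector_derivative_along_line:
  assumes "(g has_derivative g') (at (z + t *\<^sub>R w))"
  shows "((\<lambda>s. g (z + s *\<^sub>R w)) has_vector_derivative g' w) (at t)"
proof -
  have "((\<lambda>s. z + s *\<^sub>R w) has_derivative (\<lambda>h. h *\<^sub>R w)) (at t)"
    by (auto intro!: derivative_eq_intros)
  from has_derivative_compose[OF this assms] show ?thesis
    unfolding has_vector_derivative_def
    using linear_scale[OF has_derivative_linear[OF assms]] by simp
qed

lemma pd_eq_derivative:
  assumes "(g has_derivative g') (at z)"
  shows "pd g w z = g' w"
  unfolding pd_def using has_vector_derivative_along_line[of g g' z 0 w] assms
  by (simp add: vector_derivative_at)

lemma has_real_derivative_pd:
  fixes g :: "'a::real_normed_vector \<Rightarrow> real"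
  assumes "g differentiable (at (z + t *\<^sub>R w))"
  shows "((\<lambda>s. g (z + s *\<^sub>R w)) has_real_derivative pd g w (z + t *\<^sub>R w)) (at t)"
proof -
  obtain g' where g': "(g has_derivative g') (at (z + t *\<^sub>R w))"
    using assms unfolding differentiable_def by blast
  show ?thesis
    using has_vector_derivative_along_line[OF g'] pd_eq_derivative[OF g']
    by (simp add: has_real_derivative_iff_has_vector_derivative)
qed

lemma pd_zero_direction:
  fixes g :: "'a::real_normed_vector \<Rightarrow> 'b::real_normed_vector"
  shows "pd g 0 z = 0"
  unfolding pd_def by (simp add: vector_derivative_const_at)

definition second_difference :: "('a::real_normed_vector \<Rightarrow> real) \<Rightarrow> 'a \<Rightarrow> 'a \<Rightarrow> 'a \<Rightarrow> real \<Rightarrow> real" where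
  "second_difference f a b p s = f (p + s *\<^sub>R a + s *\<^sub>R b) - f (p + s *\<^sub>R a) - f (p + s *\<^sub>R b) + f p"

lemma second_difference_commute: "second_difference f a b p s = second_difference f b a p s"
  unfolding second_difference_def by (simp add: algebra_simps)

lemma second_difference_mean_value:
  fixes f :: "'a::real_normed_vector \<Rightarrow> real"
  assumes f: "\<forall>y. f differentiable (at y)"
    and fa: "\<forall>y. pd f a differentiable (at y)"
    and s: "0 < s"
  shows "\<exists>\<xi> \<eta>. 0 < \<xi> \<and> \<xi> < s \<and> 0 < \<eta> \<and> \<eta> < s \<and>
           second_difference f a b p s = s * s * pd (pd f a) b (p + \<xi> *\<^sub>R a + \<eta> *\<^sub>R b)"
proof -
  have "\<exists>\<xi>. 0 < \<xi> \<and> \<xi> < s \<and>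
      (f ((p + s *\<^sub>R b) + s *\<^sub>R a) - f (p + s *\<^sub>R a)) - (f ((p + s *\<^sub>R b) + 0 *\<^sub>R a) - f (p + 0 *\<^sub>R a))
      = (s - 0) * (pd f a ((p + s *\<^sub>R b) + \<xi> *\<^sub>R a) - pd f a (p + \<xi> *\<^sub>R a))"
    by (rule MVT2[OF s]) (intro DERIV_diff has_real_derivative_pd f[rule_format])
  then obtain \<xi> where \<xi>: "0 < \<xi>" "\<xi> < s" and
    D: "second_difference f a b p s
          = s * (pd f a ((p + \<xi> *\<^sub>R a) + s *\<^sub>R b) - pd f a ((p + \<xi> *\<^sub>R a) + 0 *\<^sub>R b))"
    unfolding second_difference_def by (auto simp: algebra_simps)
  have "\<exists>\<eta>. 0 < \<eta> \<and> \<eta> < s \<and>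
      pd f a ((p + \<xi> *\<^sub>R a) + s *\<^sub>R b) - pd f a ((p + \<xi> *\<^sub>R a) + 0 *\<^sub>R b)
      = (s - 0) * pd (pd f a) b ((p + \<xi> *\<^sub>R a) + \<eta> *\<^sub>R b)"
    by (rule MVT2[OF s]) (intro has_real_derivative_pd fa[rule_format])
  with \<xi> D show ?thesis by auto
qed

text \<open>Schwarz's theorem: the second difference is symmetric in \<open>a\<close> and \<open>b\<close> and equals \<open>s\<^sup>2\<close>
  times either mixed derivative at some point near \<open>p\<close>; let \<open>s\<close> tend to \<open>0\<close>.\<close>

lemma pd_pd_commute:
  fixes f :: "'a::real_normed_vector \<Rightarrow> real"
  assumes f: "\<forall>y. f differentiable (at y)"
    and fa: "\<forall>y. pd f a differentiable (at y)"
    and fb: "\<forall>y. pd f b differentiable (at y)"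
    and cont_ab: "continuous (at p) (pd (pd f a) b)"
    and cont_ba: "continuous (at p) (pd (pd f b) a)"
  shows "pd (pd f a) b p = pd (pd f b) a p"
proof (rule ccontr)
  let ?G = "pd (pd f a) b" and ?H = "pd (pd f b) a"
  assume "?G p \<noteq> ?H p"
  then have e: "0 < \<bar>?G p - ?H p\<bar> / 2" (is "0 < ?e") by simp
  obtain d1 where d1: "0 < d1" "\<And>y. dist y p < d1 \<Longrightarrow> dist (?G y) (?G p) < ?e"
    using cont_ab e unfolding continuous_at_eps_delta by blast
  obtain d2 where d2: "0 < d2" "\<And>y. dist y p < d2 \<Longrightarrow> dist (?H y) (?H p) < ?e"
    using cont_ba e unfolding continuous_at_eps_delta by blast
  have ab: "0 < norm a + norm b + 1"
    using norm_ge_zero[of a] norm_ge_zero[of b] by linarith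
  define s where "s = min d1 d2 / (norm a + norm b + 1)"
  have s: "0 < s" using d1(1) d2(1) ab unfolding s_def by simp
  have near: "dist (p + x *\<^sub>R a + y *\<^sub>R b) p < min d1 d2"
    if "0 < x" "x < s" "0 < y" "y < s" for x y
  proof -
    have "dist (p + x *\<^sub>R a + y *\<^sub>R b) p \<le> x * norm a + y * norm b"
      using norm_triangle_ineq[of "x *\<^sub>R a" "y *\<^sub>R b"] that by (simp add: dist_norm)
    also have "\<dots> \<le> s * (norm a + norm b)"
      using that by (simp add: distrib_left add_mono mult_right_mono)
    also have "\<dots> < s * (norm a + norm b + 1)" using s by simp
    also have "\<dots> = min d1 d2" using ab unfolding s_def by simp
    finally show ?thesis .
  qed
  obtain \<xi> \<eta> where \<xi>\<eta>: "0 < \<xi>" "\<xi> < s" "0 < \<eta>" "\<eta> < s"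
    and G: "second_difference f a b p s = s * s * ?G (p + \<xi> *\<^sub>R a + \<eta> *\<^sub>R b)"
    using second_difference_mean_value[OF f fa s] by blast
  obtain \<eta>' \<xi>' where \<xi>\<eta>': "0 < \<eta>'" "\<eta>' < s" "0 < \<xi>'" "\<xi>' < s"
    and H: "second_difference f b a p s = s * s * ?H (p + \<eta>' *\<^sub>R b + \<xi>' *\<^sub>R a)"
    using second_difference_mean_value[OF f fb s] by blast
  have same: "?G (p + \<xi> *\<^sub>R a + \<eta> *\<^sub>R b) = ?H (p + \<xi>' *\<^sub>R a + \<eta>' *\<^sub>R b)"
    using G H s by (simp add: second_difference_commute add_ac)
  have "\<bar>?G (p + \<xi> *\<^sub>R a + \<eta> *\<^sub>R b) - ?G p\<bar> < ?e"
    using d1(2) near[OF \<xi>\<eta>] by (simp add: dist_real_def)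
  moreover have "\<bar>?H (p + \<xi>' *\<^sub>R a + \<eta>' *\<^sub>R b) - ?H p\<bar> < ?e"
    using d2(2) near[OF \<xi>\<eta>'(3,4,1,2)] by (simp add: dist_real_def)
  ultimately have "\<bar>?G p - ?H p\<bar> < 2 * ?e"
    unfolding same by linarith
  then show False by simp
qed

lemma smooth_on_UNIV_iter_pd_differentiable:
  "smooth_on UNIV f \<Longrightarrow> iter_pd ws f differentiable (at y)"
  unfolding smooth_on_def by blast

lemma pd_pd_commute_smooth:
  fixes f :: "'a::real_normed_vector \<Rightarrow> real"
  assumes "smooth_on UNIV f"
  shows "pd (pd f a) b p = pd (pd f b) a p"
proof -
  note d = smooth_on_UNIV_iter_pd_differentiable[OF assms]
  have c: "continuous (at p) (iter_pd ws f)" for ws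
    using d differentiable_imp_continuous_within by blast
  show ?thesis
    using pd_pd_commute[of f a b p] d[of "[]"] d[of "[a]"] d[of "[b]"] c[of "[b, a]"] c[of "[a, b]"]
    by simp
qed

lemma det_nonzero_iff_trivial_kernel:
  fixes A :: "'a::field^'n^'n"
  shows "det A \<noteq> 0 \<longleftrightarrow> (\<forall>x. A *v x = 0 \<longrightarrow> x = 0)"
  by (simp add: invertible_det_nz[symmetric] invertible_left_inverse matrix_left_invertible_ker)

lemma det_block_nonzero:
  fixes A :: "'a::field^('m::finite + 'm)^('m + 'm)" and M N :: "'a^'m^'m"
  assumes M: "det M \<noteq> 0" and N: "det N \<noteq> 0"
    and A_upper_right: "\<And>a b. A $ Inl a $ Inr b = M $ a $ b"
    and A_lower_left: "\<And>a b. A $ Inr a $ Inl b = N $ a $ b"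
    and A_lower_right: "\<And>a b. A $ Inr a $ Inr b = 0"
  shows "det A \<noteq> 0"
  unfolding det_nonzero_iff_trivial_kernel
proof (intro allI impI)
  fix y assume Ay: "A *v y = 0"
  define u where "u = (\<chi> b. y $ Inl b)"
  define w where "w = (\<chi> b. y $ Inr b)"
  have Ay_split: "(A *v y) $ c = (\<Sum>b\<in>UNIV. A $ c $ Inl b * u $ b) + (\<Sum>b\<in>UNIV. A $ c $ Inr b * w $ b)"
    for c
  proof -
    have "(A *v y) $ c = (\<Sum>d\<in>UNIV <+> UNIV. A $ c $ d * y $ d)"
      by (simp add: matrix_vector_mult_def)
    also have "\<dots> = (\<Sum>b\<in>UNIV. A $ c $ Inl b * u $ b) + (\<Sum>b\<in>UNIV. A $ c $ Inr b * w $ b)"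
      by (subst sum.Plus) (auto simp: u_def w_def)
    finally show ?thesis .
  qed
  have "N *v u = 0"
    using Ay_split[of "Inr _"] Ay
    by (simp add: vec_eq_iff A_lower_left A_lower_right matrix_vector_mult_def)
  then have u: "u = 0" using N by (simp add: det_nonzero_iff_trivial_kernel)
  have "M *v w = 0"
    using Ay_split[of "Inl _"] Ay
    by (simp add: vec_eq_iff A_upper_right u matrix_vector_mult_def)
  then have w: "w = 0" using M by (simp add: det_nonzero_iff_trivial_kernel)
  show "y = 0"
    unfolding vec_eq_iff
  proof
    fix c show "y $ c = 0 $ c"
      using u w by (cases c) (auto simp: u_def w_def vec_eq_iff)
  qed
qed

lemma sum_mult_axis: "(\<Sum>j\<in>UNIV. c j * axis i (1::real) $ j) = c i"
  by (simp add: axis_def if_distrib[of "times _"] cong: if_cong)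

lemma sum_sum_mult_axis_axis:
  "(\<Sum>j\<in>UNIV. \<Sum>g\<in>UNIV. c j g * axis i (axis mu (1::real)) $ j $ g) = c i mu"
  by (simp add: axis_def if_distrib[of "times _"] if_distrib[of "\<lambda>x. x $ _"] cong: if_cong)
    (simp add: sum.If_cases)

definition fibre_linear ::
  "('n::finite \<Rightarrow> ('n, 'k::finite) jet \<Rightarrow> real) \<Rightarrow> ('n \<Rightarrow> 'k \<Rightarrow> ('n, 'k) jet \<Rightarrow> real) \<Rightarrow> ('n, 'k) jetT \<Rightarrow> real"
where
  "fibre_linear F G = (\<lambda>(x, (q, v), (Q, V)).
     (\<Sum>i\<in>UNIV. F i (x, q, Q) * v $ i) + (\<Sum>i\<in>UNIV. \<Sum>mu\<in>UNIV. G i mu (x, q, Q) * V $ i $ mu))"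

lemma Ltilde_eq_fibre_linear: "Ltilde L = fibre_linear (\<lambda>j. pd L (e_q j)) (\<lambda>j g. pd L (e_qd j g))"
  unfolding Ltilde_def fibre_linear_def ..

lemma pd_fibre_linear:
  assumes dF: "\<And>j. F j differentiable (at (x, q, Q))"
    and dG: "\<And>j g. G j g differentiable (at (x, q, Q))"
  shows "pd (fibre_linear F G) (wx, (wq, wv), (wQ, wV)) (x, (q, v), (Q, V)) =
     (\<Sum>j\<in>UNIV. pd (F j) (wx, wq, wQ) (x, q, Q) * v $ j + F j (x, q, Q) * wv $ j)
   + (\<Sum>j\<in>UNIV. \<Sum>g\<in>UNIV. pd (G j g) (wx, wq, wQ) (x, q, Q) * V $ j $ g + G j g (x, q, Q) * wV $ j $ g)"
proof -
  let ?p = "(x, q, Q)" and ?w = "(wx, wq, wQ)"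
  have line: "fibre_linear F G ((x, (q, v), (Q, V)) + t *\<^sub>R (wx, (wq, wv), (wQ, wV))) =
     (\<Sum>j\<in>UNIV. F j (?p + t *\<^sub>R ?w) * (v $ j + t * wv $ j))
   + (\<Sum>j\<in>UNIV. \<Sum>g\<in>UNIV. G j g (?p + t *\<^sub>R ?w) * (V $ j $ g + t * wV $ j $ g))" for t
    unfolding fibre_linear_def by simp
  have F': "((\<lambda>t. F j (?p + t *\<^sub>R ?w)) has_real_derivative pd (F j) ?w ?p) (at 0)" for j
    using has_real_derivative_pd[of "F j" ?p 0 ?w] dF by simp
  have G': "((\<lambda>t. G j g (?p + t *\<^sub>R ?w)) has_real_derivative pd (G j g) ?w ?p) (at 0)" for j g
    using has_real_derivative_pd[of "G j g" ?p 0 ?w] dG by simp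
  have "((\<lambda>t. fibre_linear F G ((x, (q, v), (Q, V)) + t *\<^sub>R (wx, (wq, wv), (wQ, wV))))
     has_real_derivative
       (\<Sum>j\<in>UNIV. pd (F j) ?w ?p * (v $ j + 0 * wv $ j) + F j (?p + 0 *\<^sub>R ?w) * wv $ j)
     + (\<Sum>j\<in>UNIV. \<Sum>g\<in>UNIV. pd (G j g) ?w ?p * (V $ j $ g + 0 * wV $ j $ g)
                                + G j g (?p + 0 *\<^sub>R ?w) * wV $ j $ g)) (at 0)"
    unfolding line
    by (intro DERIV_add DERIV_sum DERIV_mult F' G') (use F' G' in \<open>auto intro!: derivative_eq_intros\<close>)
  then show ?thesis
    unfolding pd_def by (simp add: has_real_derivative_iff_has_vector_derivative vector_derivative_at)
qed

lemma pd_base_function: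
  "pd (\<lambda>(x, (q, v), (Q, V)). h (x, q, Q)) (wx, (wq, wv), (wQ, wV)) (x, (q, v), (Q, V))
     = pd h (wx, wq, wQ) (x, q, Q)"
  unfolding pd_def by simp

context
  fixes L :: "('n::finite, 'k::finite) jet \<Rightarrow> real"
  assumes L_smooth: "smooth_on UNIV L"
begin

private lemmas pd_L_differentiable =
  smooth_on_UNIV_iter_pd_differentiable[OF L_smooth, of "[_]", simplified]

private lemmas pd_pd_L_differentiable =
  smooth_on_UNIV_iter_pd_differentiable[OF L_smooth, of "[_, _]", simplified]

private lemmas pd_zero_jet_direction =
  pd_zero_direction[where 'a = "('n, 'k) jet", unfolded zero_prod_def]

lemma pd_Ltilde_eT_q:
  "pd (Ltilde L) (eT_q i) = fibre_linear (\<lambda>j. pd (pd L (e_q j)) (e_q i)) (\<lambda>j g. pd (pd L (e_qd j g)) (e_q i))"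
  by (simp add: fun_eq_iff Ltilde_eq_fibre_linear eT_q_def pd_fibre_linear pd_L_differentiable)
    (simp add: fibre_linear_def e_q_def)

lemma pd_Ltilde_eT_qd:
  "pd (Ltilde L) (eT_qd i mu)
     = fibre_linear (\<lambda>j. pd (pd L (e_qd i mu)) (e_q j)) (\<lambda>j g. pd (pd L (e_qd i mu)) (e_qd j g))"
proof -
  have "pd (Ltilde L) (eT_qd i mu)
     = fibre_linear (\<lambda>j. pd (pd L (e_q j)) (e_qd i mu)) (\<lambda>j g. pd (pd L (e_qd j g)) (e_qd i mu))"
    by (simp add: fun_eq_iff Ltilde_eq_fibre_linear eT_qd_def pd_fibre_linear pd_L_differentiable)
      (simp add: fibre_linear_def e_qd_def)
  also have "\<dots> = fibre_linear (\<lambda>j. pd (pd L (e_qd i mu)) (e_q j)) (\<lambda>j g. pd (pd L (e_qd i mu)) (e_qd j g))"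
    by (intro arg_cong2[where f = fibre_linear] ext pd_pd_commute_smooth[OF L_smooth])
  finally show ?thesis .
qed

lemma pd_Ltilde_eT_v: "pd (Ltilde L) (eT_v i) = (\<lambda>(x, (q, v), (Q, V)). pd L (e_q i) (x, q, Q))"
  by (simp add: fun_eq_iff Ltilde_eq_fibre_linear eT_v_def pd_fibre_linear pd_L_differentiable
      sum_mult_axis pd_zero_jet_direction)

lemma pd_Ltilde_eT_vd: "pd (Ltilde L) (eT_vd i mu) = (\<lambda>(x, (q, v), (Q, V)). pd L (e_qd i mu) (x, q, Q))"
  by (simp add: fun_eq_iff Ltilde_eq_fibre_linear eT_vd_def pd_fibre_linear pd_L_differentiable
      sum_sum_mult_axis_axis pd_zero_jet_direction)

lemma regularT_Ltilde:
  assumes "regular L"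
  shows "regularT (Ltilde L)"
  unfolding regularT_def
proof
  fix z :: "('n, 'k) jetT"
  obtain x q v Q V where z: "z = (x, (q, v), (Q, V))" by (metis prod.collapse)
  define M :: "real^('n \<times> 'k)^('n \<times> 'k)" where
    "M = (\<chi> a b. pd (pd L (e_qd (fst b) (snd b))) (e_qd (fst a) (snd a)) (x, q, Q))"
  have M: "det M \<noteq> 0" using assms unfolding regular_def M_def by blast
  show "det (\<chi> a b. pd (pd (Ltilde L) (velT b)) (velT a) z) \<noteq> 0"
  proof (rule det_block_nonzero[OF M M])
    fix a b :: "'n \<times> 'k"
    obtain i mu j g where ab: "a = (i, mu)" "b = (j, g)" by fastforce
    show "(\<chi> a b. pd (pd (Ltilde L) (velT b)) (velT a) z) $ Inl a $ Inr b = M $ a $ b"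
      by (simp add: ab z M_def velT_def pd_Ltilde_eT_vd eT_qd_def e_qd_def pd_base_function)
    show "(\<chi> a b. pd (pd (Ltilde L) (velT b)) (velT a) z) $ Inr a $ Inl b = M $ a $ b"
      by (simp add: ab z M_def velT_def pd_Ltilde_eT_qd eT_vd_def pd_fibre_linear
          pd_pd_L_differentiable sum_sum_mult_axis_axis pd_zero_jet_direction)
    show "(\<chi> a b. pd (pd (Ltilde L) (velT b)) (velT a) z) $ Inr a $ Inr b = 0"
      by (simp add: ab z velT_def pd_Ltilde_eT_vd)
        (simp add: eT_vd_def pd_base_function pd_zero_jet_direction)
  qed
qed

end

theorem mainTheorem1:
  fixes L :: "('n::finite, 'k::finite) jet \<Rightarrow> real"
    and U :: "(real^'k) set"
    and psi :: "real^'k \<Rightarrow> (real^'n) \<times> (real^'n)"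
  assumes L_smooth: "smooth_on UNIV L"
    and U_open: "open U"
    and psi_smooth: "smooth_on U psi"
  shows "((\<forall>x\<in>U. \<forall>i.
            (\<Sum>mu\<in>UNIV. dx mu (\<lambda>y. pd (Ltilde L) (eT_qd i mu) (prolongT psi y)) x)
              - pd (Ltilde L) (eT_q i) (prolongT psi x) = 0
          \<and> (\<Sum>mu\<in>UNIV. dx mu (\<lambda>y. pd (Ltilde L) (eT_vd i mu) (prolongT psi y)) x)
              - pd (Ltilde L) (eT_v i) (prolongT psi x) = 0)
        \<longleftrightarrow>
         (\<forall>x\<in>U. \<forall>i.
            (let q = (\<lambda>y. fst (psi y)); v = (\<lambda>y. snd (psi y)) in
              (\<Sum>mu\<in>UNIV. dx mu (\<lambda>y.
                   (\<Sum>j\<in>UNIV. pd (pd L (e_qd i mu)) (e_q j) (prolong q y) * v y $ j)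
                 + (\<Sum>j\<in>UNIV. \<Sum>gam\<in>UNIV. pd (pd L (e_qd i mu)) (e_qd j gam) (prolong q y)
                        * jac v y $ j $ gam)) x)
              - (\<Sum>j\<in>UNIV. pd (pd L (e_q j)) (e_q i) (prolong q x) * v x $ j)
              - (\<Sum>j\<in>UNIV. \<Sum>gam\<in>UNIV. pd (pd L (e_qd j gam)) (e_q i) (prolong q x)
                        * jac v x $ j $ gam) = 0
            \<and> (\<Sum>mu\<in>UNIV. dx mu (\<lambda>y. pd L (e_qd i mu) (prolong q y)) x)
              - pd L (e_q i) (prolong q x) = 0)))
     \<and> (regular L \<longrightarrow> regularT (Ltilde L))"
  \<comment> \<open>The equivalence holds pointwise, term by term.\<close>
  using regularT_Ltilde[OF L_smooth]
  by (simp add: pd_Ltilde_eT_q[OF L_smooth] pd_Ltilde_eT_qd[OF L_smooth] pd_Ltilde_eT_v[OF L_smooth]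
      pd_Ltilde_eT_vd[OF L_smooth] fibre_linear_def prolongT_def prolong_def Let_def diff_diff_eq
      prod.case_eq_if)

end
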